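(* Let $d\ge 2$ and let ${\cal P}=\{\Pi_i,\frac{1}{d^2}\}_{i=1}^{d^2}$ be a symmetric informationally complete (SIC) ensemble on $\mathbb{C}^d$, i.e. $\Pi_i=|\psi_i\rangle\langle\psi_i|$ for unit vectors $\psi_i$ with $|\langle\psi_i|\psi_j\rangle|^2=\frac{1}{d+1}$ for all $i\ne j$, each with probability $1/d^2$. Then the accessible fidelity of ${\cal P}$ is $$F_{\cal P}=\frac{2}{d+1}.$$ Moreover, for any (finite) POVM ${\cal G}=\{G_b\}$ on $\mathbb{C}^d$ consisting of rank-one elements $G_b=g_b|\phi_b\rangle\langle\phi_b|$ ($g_b>0$, $\|\phi_b\|=1$), the achievable fidelity satisfies $F_{\cal P}({\cal G})=\frac{2}{d+1}=F_{\cal P}$, so any such POVM can be used in an optimal eavesdropping strategy.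
   Context: For a POVM ${\cal E}=\{E_b\}$ and a state-reproduction strategy ${\cal M}:b\mapsto\sigma_b$ (density operators), the average fidelity is $F_{\cal P}({\cal E},{\cal M})=\sum_{b,i}\pi_i\,{\rm tr}(\Pi_iE_b)\,{\rm tr}(\Pi_i\sigma_b)$ (here $\pi_i=1/d^2$). The achievable fidelity of ${\cal E}$ is $F_{\cal P}({\cal E})=\sup_{\cal M}F_{\cal P}({\cal E},{\cal M})$, and the accessible fidelity is $F_{\cal P}=\sup_{{\cal E},{\cal M}}F_{\cal P}({\cal E},{\cal M})$. *)

theory Defs
  imports "Jordan_Normal_Form.Matrix"
begin

definition cinner :: "complex vec \<Rightarrow> complex vec \<Rightarrow> complex" where
  "cinner u v = (\<Sum>i<dim_vec u. cnj (u $ i) * v $ i)"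

definition mtrace :: "complex mat \<Rightarrow> complex" where
  "mtrace A = (\<Sum>i<dim_row A. A $$ (i, i))"

definition ketbra :: "complex vec \<Rightarrow> complex mat" where
  "ketbra \<phi> = mat (dim_vec \<phi>) (dim_vec \<phi>) (\<lambda>(i, j). \<phi> $ i * cnj (\<phi> $ j))"

definition hermitian_mat :: "complex mat \<Rightarrow> bool" where
  "hermitian_mat A \<longleftrightarrow> (\<forall>i<dim_row A. \<forall>j<dim_col A. A $$ (i, j) = cnj (A $$ (j, i)))"

definition psd :: "nat \<Rightarrow> complex mat \<Rightarrow> bool" where
  "psd d A \<longleftrightarrow> A \<in> carrier_mat d d \<and> hermitian_mat A \<and>
     (\<forall>v. dim_vec v = d \<longrightarrow> Re (cinner v (A *\<^sub>v v)) \<ge> 0)"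

definition density :: "nat \<Rightarrow> complex mat \<Rightarrow> bool" where
  "density d \<rho> \<longleftrightarrow> psd d \<rho> \<and> mtrace \<rho> = 1"

definition povm :: "nat \<Rightarrow> nat \<Rightarrow> (nat \<Rightarrow> complex mat) \<Rightarrow> bool" where
  "povm d n E \<longleftrightarrow> (\<forall>b<n. psd d (E b)) \<and>
     (\<forall>i<d. \<forall>j<d. (\<Sum>b<n. E b $$ (i, j)) = (1\<^sub>m d) $$ (i, j))"

definition rank_one_povm :: "nat \<Rightarrow> nat \<Rightarrow> (nat \<Rightarrow> complex mat) \<Rightarrow> bool" where
  "rank_one_povm d n G \<longleftrightarrow> povm d n G \<and>
     (\<forall>b<n. \<exists>g \<phi>. g > 0 \<and> dim_vec \<phi> = d \<and> cinner \<phi> \<phi> = 1 \<and>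
        G b = complex_of_real g \<cdot>\<^sub>m ketbra \<phi>)"

definition sic :: "nat \<Rightarrow> (nat \<Rightarrow> complex vec) \<Rightarrow> bool" where
  "sic d \<psi> \<longleftrightarrow> (\<forall>i<d^2. dim_vec (\<psi> i) = d \<and> cinner (\<psi> i) (\<psi> i) = 1) \<and>
     (\<forall>i<d^2. \<forall>j<d^2. i \<noteq> j \<longrightarrow> (cmod (cinner (\<psi> i) (\<psi> j)))\<^sup>2 = 1 / (real d + 1))"

definition avg_fidelity :: "nat \<Rightarrow> (nat \<Rightarrow> complex vec) \<Rightarrow> nat \<Rightarrow> (nat \<Rightarrow> complex mat)
    \<Rightarrow> (nat \<Rightarrow> complex mat) \<Rightarrow> real" where
  "avg_fidelity d \<psi> n E \<sigma> = Re (\<Sum>b<n. \<Sum>i<d^2. complex_of_real (1 / (real d)^2) *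
       mtrace (ketbra (\<psi> i) * E b) * mtrace (ketbra (\<psi> i) * \<sigma> b))"

definition achievable_fidelity :: "nat \<Rightarrow> (nat \<Rightarrow> complex vec) \<Rightarrow> nat \<Rightarrow> (nat \<Rightarrow> complex mat) \<Rightarrow> real" where
  "achievable_fidelity d \<psi> n E =
     Sup {avg_fidelity d \<psi> n E \<sigma> | \<sigma>. \<forall>b<n. density d (\<sigma> b)}"

definition accessible_fidelity :: "nat \<Rightarrow> (nat \<Rightarrow> complex vec) \<Rightarrow> real" where
  "accessible_fidelity d \<psi> =
     Sup {avg_fidelity d \<psi> n E \<sigma> | n E \<sigma>. povm d n E \<and> (\<forall>b<n. density d (\<sigma> b))}"

end

theory Submission
  imports Defs
begin

text \<open>A SIC is a complex projective 2-design: its frame potential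
  \<open>\<Sum>\<^sub>i\<^sub>j |\<langle>\<psi>\<^sub>i|\<psi>\<^sub>j\<rangle>|\<^sup>4\<close> attains the Welch bound \<open>2 N\<^sup>2 / (d (d + 1))\<close>, and equality forces
  \<open>\<Sum>\<^sub>i |\<psi>\<^sub>i \<otimes> \<psi>\<^sub>i\<rangle>\<langle>\<psi>\<^sub>i \<otimes> \<psi>\<^sub>i| = N / (d (d + 1)) \<cdot> (1 + SWAP)\<close>. Hence
  \<open>\<Sum>\<^sub>i tr (\<Pi>\<^sub>i A) tr (\<Pi>\<^sub>i B) = d / (d + 1) \<cdot> (tr A tr B + tr (A B))\<close>, and the average fidelity
  becomes \<open>\<Sum>\<^sub>b (tr E\<^sub>b + tr (E\<^sub>b \<sigma>\<^sub>b)) / (d (d + 1))\<close>. Since \<open>tr (E \<sigma>) \<le> tr E\<close> for \<open>E \<ge> 0\<close> and a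
  state \<open>\<sigma>\<close>, and \<open>\<Sum>\<^sub>b tr E\<^sub>b = d\<close>, the fidelity is at most \<open>2 / (d + 1)\<close>. For a rank-one element
  \<open>E\<^sub>b = g |\<phi>\<rangle>\<langle>\<phi>|\<close> the choice \<open>\<sigma>\<^sub>b = |\<phi>\<rangle>\<langle>\<phi>|\<close> gives \<open>E\<^sub>b \<sigma>\<^sub>b = E\<^sub>b\<close>, so the bound is attained.\<close>

lemma sum2_sum_swap:
  "(\<Sum>a\<in>A. \<Sum>b\<in>B. \<Sum>i\<in>I. f a b i) = (\<Sum>i\<in>I. \<Sum>a\<in>A. \<Sum>b\<in>B. f a b i)"
  by (simp add: sum.swap[of _ I])

lemma sum4_sum_swap:
  "(\<Sum>a\<in>A. \<Sum>b\<in>B. \<Sum>c\<in>C. \<Sum>e\<in>E. \<Sum>i\<in>I. f a b c e i)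
    = (\<Sum>i\<in>I. \<Sum>a\<in>A. \<Sum>b\<in>B. \<Sum>c\<in>C. \<Sum>e\<in>E. f a b c e i)"
  by (simp add: sum.swap[of _ I])

lemma sum4_sum_mult:
  fixes f g :: "'i \<Rightarrow> 'j \<Rightarrow> 'a::comm_semiring_1"
  shows "(\<Sum>a\<in>A. \<Sum>b\<in>A. \<Sum>c\<in>A. \<Sum>e\<in>A. \<Sum>i\<in>I. f i a * f i b * g i c * g i e)
    = (\<Sum>i\<in>I. sum (f i) A * sum (f i) A * sum (g i) A * sum (g i) A)"
proof -
  have "(\<Sum>a\<in>A. \<Sum>b\<in>A. \<Sum>c\<in>A. \<Sum>e\<in>A. \<Sum>i\<in>I. f i a * f i b * g i c * g i e)
      = (\<Sum>i\<in>I. \<Sum>a\<in>A. \<Sum>b\<in>A. \<Sum>c\<in>A. \<Sum>e\<in>A. f i a * f i b * g i c * g i e)"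
    by (rule sum4_sum_swap)
  then show ?thesis
    by (simp only: sum_distrib_left[symmetric] sum_distrib_right[symmetric])
qed

lemma complex_of_real_cmod_power4: "complex_of_real ((cmod w) ^ 4) = cnj w * cnj w * w * w"
proof -
  have "complex_of_real ((cmod w) ^ 4) = (complex_of_real ((cmod w)\<^sup>2))\<^sup>2"
    by simp
  also have "\<dots> = (w * cnj w)\<^sup>2"
    by (simp only: complex_norm_square)
  finally show ?thesis
    by (simp add: power2_eq_square ac_simps)
qed

section \<open>Fourth moments and the Welch bound\<close>

text \<open>Entry \<open>((a, b), (c, e))\<close> of \<open>\<Sum>\<^sub>i |\<psi>\<^sub>i \<otimes> \<psi>\<^sub>i\<rangle>\<langle>\<psi>\<^sub>i \<otimes> \<psi>\<^sub>i|\<close>.\<close>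

definition fourth_moment :: "(nat \<Rightarrow> complex vec) \<Rightarrow> nat \<Rightarrow> nat \<Rightarrow> nat \<Rightarrow> nat \<Rightarrow> nat \<Rightarrow> complex" where
  "fourth_moment \<psi> N a b c e = (\<Sum>i<N. \<psi> i $ a * \<psi> i $ b * cnj (\<psi> i $ c) * cnj (\<psi> i $ e))"

text \<open>Entry \<open>((a, b), (c, e))\<close> of \<open>1 + SWAP\<close> on \<open>\<complex>\<^sup>d \<otimes> \<complex>\<^sup>d\<close>.\<close>

definition id_plus_swap :: "nat \<Rightarrow> nat \<Rightarrow> nat \<Rightarrow> nat \<Rightarrow> 'a::comm_semiring_1" where
  "id_plus_swap a b c e = of_bool (a = c \<and> b = e) + of_bool (a = e \<and> b = c)"

definition frame_potential :: "(nat \<Rightarrow> complex vec) \<Rightarrow> nat \<Rightarrow> real" where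
  "frame_potential \<psi> N = (\<Sum>i<N. \<Sum>j<N. (cmod (cinner (\<psi> i) (\<psi> j))) ^ 4)"

lemma sum_id_plus_swap_mult:
  fixes f :: "nat \<Rightarrow> nat \<Rightarrow> nat \<Rightarrow> nat \<Rightarrow> 'a::comm_semiring_1"
  shows "(\<Sum>a<d. \<Sum>b<d. \<Sum>c<d. \<Sum>e<d. id_plus_swap a b c e * f a b c e)
    = (\<Sum>a<d. \<Sum>b<d. f a b a b) + (\<Sum>a<d. \<Sum>b<d. f a b b a)"
proof -
  have split: "id_plus_swap a b c e * f a b c e
      = (if c = a then if e = b then f a b c e else 0 else 0)
      + (if c = b then if e = a then f a b c e else 0 else 0)" for a b c e
    by (simp add: id_plus_swap_def distrib_right conj_commute)
  have pull: "(\<Sum>x\<in>A. if P then g x else 0) = (if P then sum g A else 0)" for P A and g :: "nat \<Rightarrow> 'a"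
    by simp
  show ?thesis
    unfolding split sum.distrib by (simp add: pull sum.delta cong: if_cong)
qed

lemma sum_id_plus_swap_sq:
  "(\<Sum>a<d. \<Sum>b<d. \<Sum>c<d. \<Sum>e<d. (id_plus_swap a b c e :: real)\<^sup>2) = 2 * real d * (real d + 1)"
proof -
  have diag: "id_plus_swap a b a b = 1 + of_bool (a = b)" "id_plus_swap a b b a = 1 + of_bool (a = b)"
    for a b :: nat
    by (auto simp: id_plus_swap_def)
  have row: "(\<Sum>b<d. (1::real) + of_bool (a = b)) = real d + 1" if "a < d" for a
    using that by (simp add: sum.distrib of_bool_def)
  show ?thesis
    unfolding power2_eq_square sum_id_plus_swap_mult diag by (simp add: row)
qed

lemma fourth_moment_norm_sq:
  assumes dims: "\<forall>i<N. dim_vec (\<psi> i) = d"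
  shows "(\<Sum>a<d. \<Sum>b<d. \<Sum>c<d. \<Sum>e<d. (cmod (fourth_moment \<psi> N a b c e))\<^sup>2) = frame_potential \<psi> N"
proof -
  define p where "p = (\<lambda>(i, j) a. \<psi> i $ a * cnj (\<psi> j $ a))"
  have inner: "sum (p (i, j)) {..<d} = cnj (cinner (\<psi> i) (\<psi> j))" if "i < N" for i j
    using dims that by (simp add: p_def cinner_def cnj_sum mult.commute)
  have "complex_of_real (\<Sum>a<d. \<Sum>b<d. \<Sum>c<d. \<Sum>e<d. (cmod (fourth_moment \<psi> N a b c e))\<^sup>2)
      = (\<Sum>a<d. \<Sum>b<d. \<Sum>c<d. \<Sum>e<d. \<Sum>ij\<in>{..<N} \<times> {..<N}.
           p ij a * p ij b * cnj (p ij c) * cnj (p ij e))"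
    unfolding of_real_sum complex_norm_square fourth_moment_def cnj_sum sum_product
      sum.cartesian_product'
    by (intro sum.cong refl) (simp add: p_def mult_ac)
  also have "\<dots> = (\<Sum>ij\<in>{..<N} \<times> {..<N}. sum (p ij) {..<d} * sum (p ij) {..<d}
      * sum (\<lambda>c. cnj (p ij c)) {..<d} * sum (\<lambda>c. cnj (p ij c)) {..<d})"
    by (rule sum4_sum_mult)
  also have "\<dots> = (\<Sum>(i, j)\<in>{..<N} \<times> {..<N}. complex_of_real ((cmod (cinner (\<psi> i) (\<psi> j))) ^ 4))"
  proof (intro sum.cong refl, clarify)
    fix i j assume "i < N"
    then have "sum (\<lambda>c. cnj (p (i, j) c)) {..<d} = cinner (\<psi> i) (\<psi> j)"
      by (simp only: cnj_sum[symmetric] inner complex_cnj_cnj)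
    with \<open>i < N\<close> show "sum (p (i, j)) {..<d} * sum (p (i, j)) {..<d}
        * sum (\<lambda>c. cnj (p (i, j) c)) {..<d} * sum (\<lambda>c. cnj (p (i, j) c)) {..<d}
      = complex_of_real ((cmod (cinner (\<psi> i) (\<psi> j))) ^ 4)"
      by (simp only: inner complex_of_real_cmod_power4)
  qed
  finally have "complex_of_real (\<Sum>a<d. \<Sum>b<d. \<Sum>c<d. \<Sum>e<d. (cmod (fourth_moment \<psi> N a b c e))\<^sup>2)
      = complex_of_real (frame_potential \<psi> N)"
    by (simp add: frame_potential_def sum.cartesian_product' of_real_sum)
  then show ?thesis
    by (simp only: of_real_eq_iff)
qed

lemma sum_fourth_moment_diag:
  assumes dims: "\<forall>i<N. dim_vec (\<psi> i) = d" and unit: "\<forall>i<N. cinner (\<psi> i) (\<psi> i) = 1"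
  shows "(\<Sum>a<d. \<Sum>b<d. fourth_moment \<psi> N a b a b) = of_nat N"
    and "(\<Sum>a<d. \<Sum>b<d. fourth_moment \<psi> N a b b a) = of_nat N"
proof -
  have norm: "(\<Sum>a<d. \<psi> i $ a * cnj (\<psi> i $ a)) = 1" if "i < N" for i
    using dims unit that by (simp add: cinner_def mult.commute)
  have "(\<Sum>a<d. \<Sum>b<d. fourth_moment \<psi> N a b a b)
      = (\<Sum>i<N. (\<Sum>a<d. \<psi> i $ a * cnj (\<psi> i $ a)) * (\<Sum>b<d. \<psi> i $ b * cnj (\<psi> i $ b)))"
    "(\<Sum>a<d. \<Sum>b<d. fourth_moment \<psi> N a b b a)
      = (\<Sum>i<N. (\<Sum>a<d. \<psi> i $ a * cnj (\<psi> i $ a)) * (\<Sum>b<d. \<psi> i $ b * cnj (\<psi> i $ b)))"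
    unfolding fourth_moment_def sum_product by (subst sum2_sum_swap, simp add: mult_ac)+
  then show "(\<Sum>a<d. \<Sum>b<d. fourth_moment \<psi> N a b a b) = of_nat N"
    "(\<Sum>a<d. \<Sum>b<d. fourth_moment \<psi> N a b b a) = of_nat N"
    by (simp_all add: norm)
qed

lemma fourth_moment_dist_id_plus_swap:
  assumes dims: "\<forall>i<N. dim_vec (\<psi> i) = d" and unit: "\<forall>i<N. cinner (\<psi> i) (\<psi> i) = 1"
  shows "(\<Sum>a<d. \<Sum>b<d. \<Sum>c<d. \<Sum>e<d.
      (cmod (fourth_moment \<psi> N a b c e - complex_of_real (k * id_plus_swap a b c e)))\<^sup>2)
    = frame_potential \<psi> N - 4 * k * real N + 2 * k\<^sup>2 * real d * (real d + 1)"
proof -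
  define T where "T = fourth_moment \<psi> N"
  have expand: "(cmod (T a b c e - complex_of_real (k * id_plus_swap a b c e)))\<^sup>2
      = (cmod (T a b c e))\<^sup>2 - 2 * k * (id_plus_swap a b c e * Re (T a b c e))
        + k\<^sup>2 * (id_plus_swap a b c e)\<^sup>2" for a b c e
    unfolding cmod_power2 by (simp add: power2_eq_square algebra_simps)
  have diag: "(\<Sum>a<d. \<Sum>b<d. Re (T a b a b)) = real N" "(\<Sum>a<d. \<Sum>b<d. Re (T a b b a)) = real N"
    using arg_cong[OF sum_fourth_moment_diag(1)[OF dims unit], of Re]
      arg_cong[OF sum_fourth_moment_diag(2)[OF dims unit], of Re]
    by (simp_all add: T_def Re_sum)
  have "(\<Sum>a<d. \<Sum>b<d. \<Sum>c<d. \<Sum>e<d. (cmod (T a b c e - complex_of_real (k * id_plus_swap a b c e)))\<^sup>2)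
      = (\<Sum>a<d. \<Sum>b<d. \<Sum>c<d. \<Sum>e<d. (cmod (T a b c e))\<^sup>2)
        - 2 * k * (\<Sum>a<d. \<Sum>b<d. \<Sum>c<d. \<Sum>e<d. id_plus_swap a b c e * Re (T a b c e))
        + k\<^sup>2 * (\<Sum>a<d. \<Sum>b<d. \<Sum>c<d. \<Sum>e<d. (id_plus_swap a b c e)\<^sup>2)"
    unfolding expand by (simp add: sum_subtractf sum.distrib sum_distrib_left)
  also have "\<dots> = frame_potential \<psi> N - 2 * k * (2 * real N) + k\<^sup>2 * (2 * real d * (real d + 1))"
    unfolding T_def fourth_moment_norm_sq[OF dims] sum_id_plus_swap_mult sum_id_plus_swap_sq
    using diag by (simp add: T_def)
  finally show ?thesis
    by (simp add: T_def algebra_simps)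
qed

text \<open>Equality case of the Welch bound: for \<open>k = N / (d (d + 1))\<close> the distance above reduces to
  \<open>frame_potential \<psi> N - 2 N\<^sup>2 / (d (d + 1))\<close>.\<close>

lemma fourth_moment_eq_id_plus_swap:
  assumes dims: "\<forall>i<N. dim_vec (\<psi> i) = d" and unit: "\<forall>i<N. cinner (\<psi> i) (\<psi> i) = 1"
    and fp: "frame_potential \<psi> N = 2 * (real N)\<^sup>2 / (real d * (real d + 1))"
    and abce: "a < d" "b < d" "c < d" "e < d"
  shows "fourth_moment \<psi> N a b c e
    = complex_of_real (real N / (real d * (real d + 1)) * id_plus_swap a b c e)"
proof -
  define k where "k = real N / (real d * (real d + 1))"
  have kd: "k * (real d * (real d + 1)) = real N"
    using abce by (simp add: k_def)
  have "frame_potential \<psi> N = 2 * k * real N"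
    unfolding fp k_def by (simp add: power2_eq_square)
  moreover have "2 * k\<^sup>2 * real d * (real d + 1) = 2 * k * real N"
    unfolding kd[symmetric] by (simp add: power2_eq_square algebra_simps)
  ultimately have "frame_potential \<psi> N - 4 * k * real N + 2 * k\<^sup>2 * real d * (real d + 1) = 0"
    by simp
  then have "(\<Sum>a<d. \<Sum>b<d. \<Sum>c<d. \<Sum>e<d.
      (cmod (fourth_moment \<psi> N a b c e - complex_of_real (k * id_plus_swap a b c e)))\<^sup>2) = 0"
    unfolding fourth_moment_dist_id_plus_swap[OF dims unit] .
  then show ?thesis
    using abce by (simp add: k_def sum_nonneg_eq_0_iff sum_nonneg)
qed

lemma sic_frame_potential_row:
  assumes sic: "sic d \<psi>" and i: "i < d\<^sup>2"
  shows "(\<Sum>j<d\<^sup>2. (cmod (cinner (\<psi> i) (\<psi> j))) ^ 4) = 2 * real d / (real d + 1)"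
proof -
  have off_diag: "(cmod (cinner (\<psi> i) (\<psi> j))) ^ 4 = 1 / (real d + 1)\<^sup>2" if "j \<in> {..<d\<^sup>2} - {i}" for j
  proof -
    have "(cmod (cinner (\<psi> i) (\<psi> j)))\<^sup>2 = 1 / (real d + 1)"
      using sic i that unfolding sic_def by auto
    moreover have "(cmod (cinner (\<psi> i) (\<psi> j))) ^ 4 = ((cmod (cinner (\<psi> i) (\<psi> j)))\<^sup>2)\<^sup>2"
      by simp
    ultimately show ?thesis
      by (simp add: power_divide)
  qed
  have "d > 0"
    using i by (cases d) auto
  have "(\<Sum>j<d\<^sup>2. (cmod (cinner (\<psi> i) (\<psi> j))) ^ 4)
      = (cmod (cinner (\<psi> i) (\<psi> i))) ^ 4 + (\<Sum>j\<in>{..<d\<^sup>2} - {i}. (cmod (cinner (\<psi> i) (\<psi> j))) ^ 4)"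
    using i by (simp add: sum.remove)
  also have "\<dots> = 1 + real (d\<^sup>2 - 1) / (real d + 1)\<^sup>2"
    using sic i unfolding sic_def by (simp add: off_diag)
  also have "real (d\<^sup>2 - 1) = (real d - 1) * (real d + 1)"
    using \<open>d > 0\<close> by (simp add: of_nat_diff power2_eq_square algebra_simps)
  also have "(real d - 1) * (real d + 1) / (real d + 1)\<^sup>2 = (real d - 1) / (real d + 1)"
    unfolding power2_eq_square by (rule nonzero_mult_divide_mult_cancel_right) simp
  also have "1 + (real d - 1) / (real d + 1) = 2 * real d / (real d + 1)"
    by (simp add: field_simps)
  finally show ?thesis .
qed

lemma sic_frame_potential:
  assumes "sic d \<psi>"
  shows "frame_potential \<psi> (d\<^sup>2) = 2 * (real (d\<^sup>2))\<^sup>2 / (real d * (real d + 1))"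
proof (cases "d = 0")
  case False
  have "frame_potential \<psi> (d\<^sup>2) = real (d\<^sup>2) * (2 * real d / (real d + 1))"
    unfolding frame_potential_def by (simp add: sic_frame_potential_row[OF assms])
  also have "\<dots> = real d * real d * (2 * real d) / (real d + 1)"
    by (simp add: power2_eq_square)
  also have "\<dots> = real d * (real d * real d * (2 * real d)) / (real d * (real d + 1))"
    using False by (intro nonzero_mult_divide_mult_cancel_left[symmetric]) simp
  finally show ?thesis
    by (simp add: power2_eq_square mult_ac)
qed (simp add: frame_potential_def)

lemma sic_fourth_moment:
  assumes sic: "sic d \<psi>" and abce: "a < d" "b < d" "c < d" "e < d"
  shows "fourth_moment \<psi> (d\<^sup>2) a b c e = of_real (real d / (real d + 1)) * id_plus_swap a b c e"
proof -
  have dims: "\<forall>i<d\<^sup>2. dim_vec (\<psi> i) = d" and unit: "\<forall>i<d\<^sup>2. cinner (\<psi> i) (\<psi> i) = 1"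
    using sic unfolding sic_def by auto
  have "real d \<noteq> 0"
    using abce by simp
  then have k: "real (d\<^sup>2) / (real d * (real d + 1)) = real d / (real d + 1)"
    unfolding power2_eq_square of_nat_mult by (rule nonzero_mult_divide_mult_cancel_left)
  have ips: "complex_of_real (id_plus_swap a b c e) = id_plus_swap a b c e"
  proof -
    have "complex_of_real (of_bool P) = of_bool P" for P
      by (cases P) simp_all
    then show ?thesis
      unfolding id_plus_swap_def of_real_add by simp
  qed
  show ?thesis
    using fourth_moment_eq_id_plus_swap[OF dims unit sic_frame_potential[OF sic] abce]
    unfolding k of_real_mult ips .
qed

section \<open>Average fidelity of a SIC ensemble\<close>

lemma mtrace_mult:
  assumes "A \<in> carrier_mat d d" "B \<in> carrier_mat d d"
  shows "mtrace (A * B) = (\<Sum>a<d. \<Sum>c<d. A $$ (a, c) * B $$ (c, a))"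
  using assms by (simp add: mtrace_def scalar_prod_def atLeast0LessThan)

lemma mtrace_ketbra_mult:
  assumes "A \<in> carrier_mat d d" "dim_vec v = d"
  shows "mtrace (ketbra v * A) = (\<Sum>a<d. \<Sum>c<d. v $ a * cnj (v $ c) * A $$ (c, a))"
  using assms by (simp add: mtrace_def ketbra_def scalar_prod_def atLeast0LessThan)

lemma sum_mtrace_ketbra_mult_eq_fourth_moment:
  assumes dims: "\<forall>i<N. dim_vec (\<psi> i) = d" and A: "A \<in> carrier_mat d d" and B: "B \<in> carrier_mat d d"
  shows "(\<Sum>i<N. mtrace (ketbra (\<psi> i) * A) * mtrace (ketbra (\<psi> i) * B))
    = (\<Sum>a<d. \<Sum>b<d. \<Sum>c<d. \<Sum>e<d. fourth_moment \<psi> N a b c e * (A $$ (c, a) * B $$ (e, b)))"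
proof -
  have "(\<Sum>i<N. mtrace (ketbra (\<psi> i) * A) * mtrace (ketbra (\<psi> i) * B))
      = (\<Sum>i<N. (\<Sum>a<d. \<Sum>c<d. \<psi> i $ a * cnj (\<psi> i $ c) * A $$ (c, a))
               * (\<Sum>b<d. \<Sum>e<d. \<psi> i $ b * cnj (\<psi> i $ e) * B $$ (e, b)))"
    using dims by (intro sum.cong refl) (simp add: mtrace_ketbra_mult[OF A] mtrace_ketbra_mult[OF B])
  also have "\<dots> = (\<Sum>i<N. \<Sum>a<d. \<Sum>b<d. \<Sum>c<d. \<Sum>e<d.
      \<psi> i $ a * \<psi> i $ b * cnj (\<psi> i $ c) * cnj (\<psi> i $ e) * (A $$ (c, a) * B $$ (e, b)))"
    unfolding sum_product by (intro sum.cong refl) (simp add: mult_ac)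
  also have "\<dots> = (\<Sum>a<d. \<Sum>b<d. \<Sum>c<d. \<Sum>e<d. fourth_moment \<psi> N a b c e * (A $$ (c, a) * B $$ (e, b)))"
    unfolding fourth_moment_def sum_distrib_right by (rule sum4_sum_swap[symmetric])
  finally show ?thesis .
qed

lemma sic_sum_mtrace_ketbra_mult:
  assumes sic: "sic d \<psi>" and A: "A \<in> carrier_mat d d" and B: "B \<in> carrier_mat d d"
  shows "(\<Sum>i<d\<^sup>2. mtrace (ketbra (\<psi> i) * A) * mtrace (ketbra (\<psi> i) * B))
    = of_real (real d / (real d + 1)) * (mtrace A * mtrace B + mtrace (A * B))"
proof -
  have dims: "\<forall>i<d\<^sup>2. dim_vec (\<psi> i) = d"
    using sic unfolding sic_def by auto
  have "(\<Sum>i<d\<^sup>2. mtrace (ketbra (\<psi> i) * A) * mtrace (ketbra (\<psi> i) * B))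
      = of_real (real d / (real d + 1))
        * (\<Sum>a<d. \<Sum>b<d. \<Sum>c<d. \<Sum>e<d. id_plus_swap a b c e * (A $$ (c, a) * B $$ (e, b)))"
    unfolding sum_mtrace_ketbra_mult_eq_fourth_moment[OF dims A B] sum_distrib_left
    by (intro sum.cong refl) (simp add: sic_fourth_moment[OF sic])
  also have "(\<Sum>a<d. \<Sum>b<d. \<Sum>c<d. \<Sum>e<d. id_plus_swap a b c e * (A $$ (c, a) * B $$ (e, b)))
      = mtrace A * mtrace B + mtrace (A * B)"
  proof -
    have "(\<Sum>a<d. \<Sum>b<d. A $$ (a, a) * B $$ (b, b)) = mtrace A * mtrace B"
      using A B by (simp add: mtrace_def sum_product)
    moreover have "(\<Sum>a<d. \<Sum>b<d. A $$ (b, a) * B $$ (a, b)) = mtrace (A * B)"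
      unfolding mtrace_mult[OF A B] by (rule sum.swap)
    ultimately show ?thesis
      unfolding sum_id_plus_swap_mult by simp
  qed
  finally show ?thesis .
qed

lemma avg_fidelity_sic:
  assumes sic: "sic d \<psi>" and "d > 0"
    and E: "\<And>b. b < n \<Longrightarrow> E b \<in> carrier_mat d d"
    and \<sigma>: "\<And>b. b < n \<Longrightarrow> \<sigma> b \<in> carrier_mat d d" "\<And>b. b < n \<Longrightarrow> mtrace (\<sigma> b) = 1"
  shows "avg_fidelity d \<psi> n E \<sigma>
    = (\<Sum>b<n. Re (mtrace (E b)) + Re (mtrace (E b * \<sigma> b))) / (real d * (real d + 1))"
proof -
  have weight: "1 / (real d)\<^sup>2 * (real d / (real d + 1)) = 1 / (real d * (real d + 1))"
    using \<open>d > 0\<close> by (simp add: power2_eq_square)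
  have summand: "complex_of_real (1 / (real d)\<^sup>2)
        * (\<Sum>i<d\<^sup>2. mtrace (ketbra (\<psi> i) * E b) * mtrace (ketbra (\<psi> i) * \<sigma> b))
      = complex_of_real (1 / (real d * (real d + 1))) * (mtrace (E b) + mtrace (E b * \<sigma> b))"
    if "b < n" for b
    unfolding sic_sum_mtrace_ketbra_mult[OF sic E[OF that] \<sigma>(1)[OF that]] \<sigma>(2)[OF that]
      weight[symmetric] of_real_mult
    by (simp only: mult.assoc mult_1_right)
  have "avg_fidelity d \<psi> n E \<sigma> = Re (\<Sum>b<n. complex_of_real (1 / (real d)\<^sup>2)
      * (\<Sum>i<d\<^sup>2. mtrace (ketbra (\<psi> i) * E b) * mtrace (ketbra (\<psi> i) * \<sigma> b)))"
    unfolding avg_fidelity_def by (simp add: sum_distrib_left mult.assoc)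
  also have "\<dots> = Re (\<Sum>b<n. complex_of_real (1 / (real d * (real d + 1)))
      * (mtrace (E b) + mtrace (E b * \<sigma> b)))"
    by (rule arg_cong[where f = Re], rule sum.cong[OF refl], rule summand) simp
  finally show ?thesis
    by (simp add: Re_sum sum_divide_distrib)
qed

section \<open>Positive semidefinite matrices and POVMs\<close>

lemma cinner_mult_vec_two_coords:
  assumes A: "A \<in> carrier_mat d d" and ij: "i < d" "j < d"
    and v: "v = vec d (\<lambda>k. (if k = i then x else 0) + (if k = j then y else 0))"
  shows "cinner v (A *\<^sub>v v)
    = cnj x * (A $$ (i, i) * x + A $$ (i, j) * y) + cnj y * (A $$ (j, i) * x + A $$ (j, j) * y)"
proof -
  have "A *\<^sub>v v = vec d (\<lambda>k. A $$ (k, i) * x + A $$ (k, j) * y)"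
    using A ij unfolding v
    by (intro eq_vecI) (simp_all add: scalar_prod_def atLeast0LessThan distrib_left sum.distrib
        if_distrib[of "\<lambda>z. _ * z"] cong: if_cong)
  then show ?thesis
    using ij unfolding v cinner_def
    by (simp add: distrib_right sum.distrib if_distrib[of cnj] if_distrib[of "\<lambda>z. z * _"]
        cong: if_cong)
qed

lemma psd_diag:
  assumes "psd d A" "i < d"
  shows "A $$ (i, i) = of_real (Re (A $$ (i, i)))" and "Re (A $$ (i, i)) \<ge> 0"
proof -
  have A: "A \<in> carrier_mat d d" and H: "hermitian_mat A"
    and Q: "\<forall>v. dim_vec v = d \<longrightarrow> 0 \<le> Re (cinner v (A *\<^sub>v v))"
    using assms(1) unfolding psd_def by blast+
  have "A $$ (i, i) = cnj (A $$ (i, i))"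
    using A assms(2) by (intro H[unfolded hermitian_mat_def, rule_format]) auto
  then show "A $$ (i, i) = of_real (Re (A $$ (i, i)))"
    by (simp add: complex_eq_iff)
  define v where "v = vec d (\<lambda>k. (if k = i then 1 else 0) + (if k = i then 0 else (0::complex)))"
  have "dim_vec v = d"
    unfolding v_def by simp
  then have "0 \<le> Re (cinner v (A *\<^sub>v v))"
    using Q by blast
  then show "Re (A $$ (i, i)) \<ge> 0"
    unfolding cinner_mult_vec_two_coords[OF A assms(2) assms(2) v_def] by simp
qed

lemma hermitian_form_nonneg_imp_norm_sq_le:
  fixes a b :: real and c :: complex
  assumes form: "\<And>x y. 0 \<le> Re (cnj x * (of_real a * x + c * y) + cnj y * (cnj c * x + of_real b * y))"
    and "a \<ge> 0" "b \<ge> 0"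
  shows "(cmod c)\<^sup>2 \<le> a * b"
proof -
  have norm_c: "(cmod c)\<^sup>2 = (Re c)\<^sup>2 + (Im c)\<^sup>2"
    by (simp add: cmod_power2)
  consider "b > 0" | "a > 0" | "a = 0" "b = 0"
    using \<open>a \<ge> 0\<close> \<open>b \<ge> 0\<close> by linarith
  then show ?thesis
  proof cases
    case 1
    have "0 \<le> b * (a * b - ((Re c)\<^sup>2 + (Im c)\<^sup>2))"
      using form[of "of_real b" "- cnj c"] by (simp add: algebra_simps power2_eq_square)
    then show ?thesis
      using 1 norm_c by (simp add: zero_le_mult_iff)
  next
    case 2
    have "0 \<le> a * (a * b - ((Re c)\<^sup>2 + (Im c)\<^sup>2))"
      using form[of "- c" "of_real a"] by (simp add: algebra_simps power2_eq_square)
    then show ?thesis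
      using 2 norm_c by (simp add: zero_le_mult_iff)
  next
    case 3
    have "0 \<le> - 2 * ((Re c)\<^sup>2 + (Im c)\<^sup>2)"
      using form[of 1 "- cnj c"] unfolding 3 by (simp add: power2_eq_square)
    then show ?thesis
      using 3 norm_c by simp
  qed
qed

lemma psd_entry_norm_sq_le:
  assumes P: "psd d A" and ij: "i < d" "j < d"
  shows "(cmod (A $$ (i, j)))\<^sup>2 \<le> Re (A $$ (i, i)) * Re (A $$ (j, j))"
proof (rule hermitian_form_nonneg_imp_norm_sq_le)
  have A: "A \<in> carrier_mat d d" and H: "hermitian_mat A"
    and Q: "\<forall>v. dim_vec v = d \<longrightarrow> 0 \<le> Re (cinner v (A *\<^sub>v v))"
    using P unfolding psd_def by blast+
  have ji: "A $$ (j, i) = cnj (A $$ (i, j))"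
    using A ij by (intro H[unfolded hermitian_mat_def, rule_format]) auto
  fix x y :: complex
  define v where "v = vec d (\<lambda>k. (if k = i then x else 0) + (if k = j then y else 0))"
  have "dim_vec v = d"
    unfolding v_def by simp
  then have "0 \<le> Re (cinner v (A *\<^sub>v v))"
    using Q by blast
  then show "0 \<le> Re (cnj x * (of_real (Re (A $$ (i, i))) * x + A $$ (i, j) * y)
      + cnj y * (cnj (A $$ (i, j)) * x + of_real (Re (A $$ (j, j))) * y))"
    unfolding cinner_mult_vec_two_coords[OF A ij v_def] ji
      psd_diag(1)[OF P ij(1), symmetric] psd_diag(1)[OF P ij(2), symmetric] .
qed (use psd_diag(2) P ij in auto)

lemma norm_mult_le_cross_mean:
  fixes x y :: complex and e1 e2 s1 s2 :: real
  assumes "(cmod x)\<^sup>2 \<le> e1 * e2" "(cmod y)\<^sup>2 \<le> s2 * s1"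
    and "e1 \<ge> 0" "e2 \<ge> 0" "s1 \<ge> 0" "s2 \<ge> 0"
  shows "cmod (x * y) \<le> (e1 * s2 + e2 * s1) / 2"
proof (rule power2_le_imp_le)
  have "(cmod (x * y))\<^sup>2 = (cmod x)\<^sup>2 * (cmod y)\<^sup>2"
    by (simp add: norm_mult power_mult_distrib)
  also have "\<dots> \<le> (e1 * e2) * (s2 * s1)"
    using assms by (intro mult_mono) auto
  also have "\<dots> \<le> ((e1 * s2 + e2 * s1) / 2)\<^sup>2"
    using sum_squares_ge_zero[of "e1 * s2 - e2 * s1" 0] by (simp add: power2_eq_square algebra_simps)
  finally show "(cmod (x * y))\<^sup>2 \<le> ((e1 * s2 + e2 * s1) / 2)\<^sup>2" .
qed (use assms in simp)

text \<open>The \<open>2 \<times> 2\<close> minors give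
  \<open>|E\<^sub>a\<^sub>c \<sigma>\<^sub>c\<^sub>a| \<le> (E\<^sub>a\<^sub>a \<sigma>\<^sub>c\<^sub>c + E\<^sub>c\<^sub>c \<sigma>\<^sub>a\<^sub>a) / 2\<close>,
  and summing over \<open>a, c\<close> yields \<open>tr E \<cdot> tr \<sigma>\<close>.\<close>

lemma Re_mtrace_mult_density_le:
  assumes E: "psd d E" and \<sigma>: "density d \<sigma>"
  shows "Re (mtrace (E * \<sigma>)) \<le> Re (mtrace E)"
proof -
  have \<sigma>_psd: "psd d \<sigma>" and "mtrace \<sigma> = 1"
    using \<sigma> unfolding density_def by auto
  have Ec: "E \<in> carrier_mat d d" and \<sigma>c: "\<sigma> \<in> carrier_mat d d"
    using E \<sigma>_psd unfolding psd_def by auto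
  define e where "e a = Re (E $$ (a, a))" for a
  define s where "s a = Re (\<sigma> $$ (a, a))" for a
  have "(\<Sum>a<d. s a) = 1"
    using \<sigma>c \<open>mtrace \<sigma> = 1\<close> unfolding mtrace_def s_def by (simp flip: Re_sum)
  have entry: "cmod (E $$ (a, c) * \<sigma> $$ (c, a)) \<le> (e a * s c + e c * s a) / 2" if "a < d" "c < d" for a c
    unfolding e_def s_def
    using psd_entry_norm_sq_le[OF E that] psd_entry_norm_sq_le[OF \<sigma>_psd that(2,1)]
      psd_diag(2)[OF E] psd_diag(2)[OF \<sigma>_psd] that
    by (intro norm_mult_le_cross_mean) auto
  have "Re (mtrace (E * \<sigma>)) = (\<Sum>a<d. \<Sum>c<d. Re (E $$ (a, c) * \<sigma> $$ (c, a)))"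
    unfolding mtrace_mult[OF Ec \<sigma>c] by (simp add: Re_sum)
  also have "\<dots> \<le> (\<Sum>a<d. \<Sum>c<d. (e a * s c + e c * s a) / 2)"
    using entry by (intro sum_mono) (meson complex_Re_le_cmod order_trans lessThan_iff)
  also have "\<dots> = ((\<Sum>a<d. \<Sum>c<d. e a * s c) + (\<Sum>a<d. \<Sum>c<d. e c * s a)) / 2"
    by (simp add: sum.distrib sum_divide_distrib add_divide_distrib)
  also have "(\<Sum>a<d. \<Sum>c<d. e c * s a) = (\<Sum>a<d. \<Sum>c<d. e a * s c)"
    by (rule sum.swap)
  also have "(\<Sum>a<d. \<Sum>c<d. e a * s c) = Re (mtrace E)"
    using Ec \<open>(\<Sum>a<d. s a) = 1\<close> by (simp add: e_def mtrace_def Re_sum flip: sum_product)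
  finally show ?thesis
    by simp
qed

lemma povm_sum_Re_mtrace:
  assumes "povm d n E"
  shows "(\<Sum>b<n. Re (mtrace (E b))) = real d"
proof -
  have Ec: "\<And>b. b < n \<Longrightarrow> E b \<in> carrier_mat d d"
    using assms unfolding povm_def psd_def by auto
  have diag: "\<And>a. a < d \<Longrightarrow> (\<Sum>b<n. E b $$ (a, a)) = 1"
    using assms unfolding povm_def by auto
  have "(\<Sum>b<n. Re (mtrace (E b))) = (\<Sum>b<n. \<Sum>a<d. Re (E b $$ (a, a)))"
    using Ec by (intro sum.cong refl) (simp add: mtrace_def Re_sum carrier_matD(1)[OF Ec])
  also have "\<dots> = (\<Sum>a<d. Re (\<Sum>b<n. E b $$ (a, a)))"
    by (subst sum.swap) (simp add: Re_sum)
  also have "\<dots> = real d"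
    by (simp add: diag)
  finally show ?thesis .
qed

lemma ketbra_mult_ketbra:
  assumes "dim_vec \<phi> = d" "cinner \<phi> \<phi> = 1"
  shows "ketbra \<phi> * ketbra \<phi> = ketbra \<phi>"
proof (rule eq_matI)
  fix i j assume "i < dim_row (ketbra \<phi>)" "j < dim_col (ketbra \<phi>)"
  then have "(ketbra \<phi> * ketbra \<phi>) $$ (i, j) = \<phi> $ i * cinner \<phi> \<phi> * cnj (\<phi> $ j)"
    by (simp add: ketbra_def scalar_prod_def cinner_def sum_distrib_left sum_distrib_right
        atLeast0LessThan mult_ac)
  then show "(ketbra \<phi> * ketbra \<phi>) $$ (i, j) = ketbra \<phi> $$ (i, j)"
    using \<open>i < dim_row (ketbra \<phi>)\<close> \<open>j < dim_col (ketbra \<phi>)\<close> assms(2)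
    by (simp add: ketbra_def)
qed (simp_all add: ketbra_def)

lemma mtrace_ketbra:
  assumes "cinner \<phi> \<phi> = 1"
  shows "mtrace (ketbra \<phi>) = 1"
  using assms by (simp add: mtrace_def ketbra_def cinner_def mult.commute)

lemma density_ketbra:
  assumes dim: "dim_vec \<phi> = d" and unit: "cinner \<phi> \<phi> = 1"
  shows "density d (ketbra \<phi>)"
proof -
  have "0 \<le> Re (cinner v (ketbra \<phi> *\<^sub>v v))" if "dim_vec v = d" for v
  proof -
    define z where "z = cinner \<phi> v"
    have "ketbra \<phi> *\<^sub>v v = z \<cdot>\<^sub>v \<phi>"
      using dim that unfolding ketbra_def z_def cinner_def
      by (intro eq_vecI) (simp_all add: scalar_prod_def atLeast0LessThan sum_distrib_left mult_ac)
    moreover have "cinner v (z \<cdot>\<^sub>v \<phi>) = z * (\<Sum>i<d. \<phi> $ i * cnj (v $ i))"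
      using dim that by (simp add: cinner_def sum_distrib_left mult_ac)
    moreover have "(\<Sum>i<d. \<phi> $ i * cnj (v $ i)) = cnj z"
      using dim unfolding z_def cinner_def by (simp add: cnj_sum mult.commute)
    ultimately have "cinner v (ketbra \<phi> *\<^sub>v v) = cnj z * z"
      by simp
    then show ?thesis
      by (simp add: power2_eq_square[symmetric])
  qed
  then show ?thesis
    using dim mtrace_ketbra[OF unit] unfolding density_def psd_def hermitian_mat_def
    by (simp add: ketbra_def)
qed

lemma rank_one_povm_unit_vec: "rank_one_povm d d (\<lambda>b. ketbra (unit_vec d b))"
proof -
  have unit: "cinner (unit_vec d b) (unit_vec d b) = 1" if "b < d" for b
    using that unfolding cinner_def by (simp add: if_distrib cong: if_cong)
  have psd: "\<forall>b<d. psd d (ketbra (unit_vec d b))"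
    using density_ketbra[OF _ unit] unfolding density_def by simp
  have resolution: "\<forall>i<d. \<forall>j<d. (\<Sum>b<d. ketbra (unit_vec d b) $$ (i, j)) = 1\<^sub>m d $$ (i, j)"
  proof (intro allI impI)
    fix i j assume "i < d" "j < d"
    then have "ketbra (unit_vec d b) $$ (i, j) = (if i = j then if b = i then 1 else 0 else 0)"
      if "b < d" for b
      using that by (simp add: ketbra_def)
    then show "(\<Sum>b<d. ketbra (unit_vec d b) $$ (i, j)) = 1\<^sub>m d $$ (i, j)"
      using \<open>i < d\<close> \<open>j < d\<close> by (cases "i = j") simp_all
  qed
  have rank_one: "\<forall>b<d. \<exists>g \<phi>. g > 0 \<and> dim_vec \<phi> = d \<and> cinner \<phi> \<phi> = 1
      \<and> ketbra (unit_vec d b) = complex_of_real g \<cdot>\<^sub>m ketbra \<phi>"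
  proof (intro allI impI exI conjI)
    fix b assume "b < d"
    show "cinner (unit_vec d b) (unit_vec d b) = 1"
      using unit[OF \<open>b < d\<close>] .
    show "ketbra (unit_vec d b) = complex_of_real 1 \<cdot>\<^sub>m ketbra (unit_vec d b)"
      by (intro eq_matI) auto
  qed simp_all
  show ?thesis
    unfolding rank_one_povm_def povm_def using psd resolution rank_one by blast
qed

section \<open>Optimal fidelity\<close>

lemma avg_fidelity_le:
  assumes sic: "sic d \<psi>" and "d > 0" and E: "povm d n E" and \<sigma>: "\<forall>b<n. density d (\<sigma> b)"
  shows "avg_fidelity d \<psi> n E \<sigma> \<le> 2 / (real d + 1)"
proof -
  have E_psd: "\<And>b. b < n \<Longrightarrow> psd d (E b)"
    using E unfolding povm_def by auto
  have "avg_fidelity d \<psi> n E \<sigma>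
      = (\<Sum>b<n. Re (mtrace (E b)) + Re (mtrace (E b * \<sigma> b))) / (real d * (real d + 1))"
    using E_psd \<sigma> \<open>d > 0\<close> unfolding psd_def density_def by (intro avg_fidelity_sic[OF sic]) auto
  also have "\<dots> \<le> (\<Sum>b<n. Re (mtrace (E b)) + Re (mtrace (E b))) / (real d * (real d + 1))"
    using E_psd \<sigma> by (intro divide_right_mono sum_mono add_left_mono Re_mtrace_mult_density_le) auto
  also have "\<dots> = 2 * real d / (real d * (real d + 1))"
    unfolding sum.distrib povm_sum_Re_mtrace[OF E] by simp
  also have "\<dots> = 2 / (real d + 1)"
    using \<open>d > 0\<close> by simp
  finally show ?thesis .
qed

lemma rank_one_povm_optimal_reproduction:
  assumes sic: "sic d \<psi>" and "d > 0" and G: "rank_one_povm d n G"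
  obtains \<sigma> where "\<forall>b<n. density d (\<sigma> b)" and "avg_fidelity d \<psi> n G \<sigma> = 2 / (real d + 1)"
proof -
  have G_povm: "povm d n G"
    using G unfolding rank_one_povm_def by simp
  obtain g \<phi> where g\<phi>: "\<And>b. b < n \<Longrightarrow> dim_vec (\<phi> b) = d \<and> cinner (\<phi> b) (\<phi> b) = 1
      \<and> G b = complex_of_real (g b) \<cdot>\<^sub>m ketbra (\<phi> b)"
    using G unfolding rank_one_povm_def by metis
  define \<sigma> where "\<sigma> b = ketbra (\<phi> b)" for b
  have \<sigma>: "\<forall>b<n. density d (\<sigma> b)"
    unfolding \<sigma>_def using g\<phi> density_ketbra by blast
  have G_fixed: "G b * \<sigma> b = G b" if "b < n" for b
  proof -
    have "ketbra (\<phi> b) \<in> carrier_mat d d"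
      using g\<phi>[OF that] by (simp add: ketbra_def)
    then show ?thesis
      using g\<phi>[OF that] by (simp add: \<sigma>_def mult_smult_assoc_mat ketbra_mult_ketbra)
  qed
  have "avg_fidelity d \<psi> n G \<sigma> = 2 / (real d + 1)"
  proof -
    have "avg_fidelity d \<psi> n G \<sigma>
        = (\<Sum>b<n. Re (mtrace (G b)) + Re (mtrace (G b * \<sigma> b))) / (real d * (real d + 1))"
      using G_povm \<sigma> \<open>d > 0\<close> unfolding povm_def psd_def density_def
      by (intro avg_fidelity_sic[OF sic]) auto
    also have "\<dots> = 2 * (\<Sum>b<n. Re (mtrace (G b))) / (real d * (real d + 1))"
      by (simp add: G_fixed sum_distrib_left)
    also have "\<dots> = 2 * real d / (real d * (real d + 1))"
      unfolding povm_sum_Re_mtrace[OF G_povm] ..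
    also have "\<dots> = 2 / (real d + 1)"
      using \<open>d > 0\<close> by simp
    finally show ?thesis .
  qed
  with \<sigma> show ?thesis
    by (rule that)
qed

lemma achievable_fidelity_rank_one_povm:
  assumes sic: "sic d \<psi>" and "d > 0" and G: "rank_one_povm d n G"
  shows "achievable_fidelity d \<psi> n G = 2 / (real d + 1)"
  unfolding achievable_fidelity_def
proof (rule cSup_eq_maximum)
  obtain \<sigma> where "\<forall>b<n. density d (\<sigma> b)" "avg_fidelity d \<psi> n G \<sigma> = 2 / (real d + 1)"
    using rank_one_povm_optimal_reproduction[OF sic \<open>d > 0\<close> G] .
  then show "2 / (real d + 1) \<in> {avg_fidelity d \<psi> n G \<sigma> | \<sigma>. \<forall>b<n. density d (\<sigma> b)}"
    by force
next
  have "povm d n G"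
    using G unfolding rank_one_povm_def by simp
  then show "x \<le> 2 / (real d + 1)"
    if "x \<in> {avg_fidelity d \<psi> n G \<sigma> | \<sigma>. \<forall>b<n. density d (\<sigma> b)}" for x
    using that avg_fidelity_le[OF sic \<open>d > 0\<close>] by blast
qed

lemma accessible_fidelity_sic:
  assumes sic: "sic d \<psi>" and "d > 0"
  shows "accessible_fidelity d \<psi> = 2 / (real d + 1)"
  unfolding accessible_fidelity_def
proof (rule cSup_eq_maximum)
  obtain \<sigma> where "\<forall>b<d. density d (\<sigma> b)"
    "avg_fidelity d \<psi> d (\<lambda>b. ketbra (unit_vec d b)) \<sigma> = 2 / (real d + 1)"
    using rank_one_povm_optimal_reproduction[OF sic \<open>d > 0\<close> rank_one_povm_unit_vec] .
  moreover have "povm d d (\<lambda>b. ketbra (unit_vec d b))"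
    using rank_one_povm_unit_vec unfolding rank_one_povm_def by simp
  ultimately show "2 / (real d + 1)
      \<in> {avg_fidelity d \<psi> n E \<sigma> | n E \<sigma>. povm d n E \<and> (\<forall>b<n. density d (\<sigma> b))}"
    unfolding mem_Collect_eq
    by (intro exI[of _ d] exI[of _ "\<lambda>b. ketbra (unit_vec d b)"] exI[of _ \<sigma>]) simp
qed (use avg_fidelity_le[OF sic \<open>d > 0\<close>] in blast)

theorem theorem3:
  fixes d :: nat and \<psi> :: "nat \<Rightarrow> complex vec"
  assumes "d \<ge> 2" and "sic d \<psi>"
  shows "accessible_fidelity d \<psi> = 2 / (real d + 1) \<and>
    (\<forall>n G. rank_one_povm d n G \<longrightarrow>
       achievable_fidelity d \<psi> n G = 2 / (real d + 1) \<and>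
       achievable_fidelity d \<psi> n G = accessible_fidelity d \<psi>)"
proof -
  have "d > 0"
    using assms(1) by simp
  then show ?thesis
    using accessible_fidelity_sic achievable_fidelity_rank_one_povm assms(2) by simp
qed

end
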